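(* Let $\mathcal{K}$ be a finite simplicial complex with a fixed total order on its vertex set, let $\Lambda_S$ be its stories algebra and $\mathcal{I}\subseteq\Lambda_S$ the simplicial ideal described below. Then the quotient algebra $\Lambda_S/\mathcal{I}$ is isomorphic (as an algebra) to the incidence algebra $\mathcal{I}(\mathcal{K})$ of $\mathcal{K}$ (ordered by inclusion).
   Context: A simplicial complex $\mathcal{K}$ on a finite non-empty vertex set $V$ is a collection of non-empty subsets of $V$ containing all singletons and closed under non-empty subsets; it is a poset under inclusion; $\dim P=|P|-1$. For $P=\{v_0,\ldots,v_n\}$ in increasing vertex order, $\epsilon_{v_iP}=(-1)^i$. Incidence algebra: $\mathcal{I}(\mathcal{K})$ is the complex vector space with basis $\{|P\rangle\langle Q|:P,Q\in\mathcal{K},\ P\subseteq Q\}$ and product $|P\rangle\langle Q|\cdot|R\rangle\langle S|=\delta_{QR}|P\rangle\langle S|$. Stories algebra: $\Lambda_S=\bigoplus_{n\ge0}\Lambda_S^n$, where $\Lambda_S^n$ has basis the sequences $\langle P_0,\ldots,P_n\rangle$ of simplices with $P_{i-1}\neq P_i$ for all $i$, and product $\langle P_0,\ldots,P_n\rangle\cdot\langle Q_0,\ldots,Q_m\rangle=\langle P_0,\ldots,P_n,Q_1,\ldots,Q_m\rangle$ if $P_n=Q_0$, and $0$ otherwise. A story is fair if for each $i\ge1$ there is $v_i\in P_i$ with $P_{i-1}=P_i\setminus\{v_i\}$, otherwise unfair; for a fair story $w$, $\epsilon_w=\prod_{i=1}^n\epsilon_{v_iP_i}$. $\mathcal{I}_N^n$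 is the span of unfair $n$-stories, $\mathcal{I}_S^n$ is the span of all $\epsilon_ww-\epsilon_{w'}w'$ with $w,w'$ fair $n$-stories having the same first simplex and the same last simplex, and $\mathcal{I}=\bigoplus_{n\ge1}(\mathcal{I}_N^n\oplus\mathcal{I}_S^n)$ (a two-sided ideal of $\Lambda_S$). *)

theory Defs
  imports Complex_Main
begin

definition simplicial_complex :: "'v set \<Rightarrow> 'v set set \<Rightarrow> bool" where
  "simplicial_complex V K \<longleftrightarrow>
     finite V \<and> V \<noteq> {} \<and>
     (\<forall>P\<in>K. P \<noteq> {} \<and> P \<subseteq> V) \<and>
     (\<forall>v\<in>V. {v} \<in> K) \<and>
     (\<forall>P\<in>K. \<forall>Q. Q \<noteq> {} \<longrightarrow> Q \<subseteq> P \<longrightarrow> Q \<in> K)"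

text \<open>epsilon_{vP} = (-1)^i where v is the i-th vertex (from 0) of P in increasing order.\<close>
definition eps_vP :: "'v::linorder \<Rightarrow> 'v set \<Rightarrow> complex" where
  "eps_vP v P = (-1) ^ card {u \<in> P. u < v}"

text \<open>A story <P_0,...,P_n> is a non-empty list of simplices with consecutive entries distinct;
  it lies in degree n = length - 1.\<close>
definition is_story :: "'v set set \<Rightarrow> 'v set list \<Rightarrow> bool" where
  "is_story K w \<longleftrightarrow> w \<noteq> [] \<and> set w \<subseteq> K \<and> (\<forall>i. 0 < i \<and> i < length w \<longrightarrow> w ! (i - 1) \<noteq> w ! i)"

definition fair :: "'v set list \<Rightarrow> bool" where
  "fair w \<longleftrightarrow> (\<forall>i. 0 < i \<and> i < length w \<longrightarrow> (\<exists>v \<in> w ! i. w ! (i - 1) = w ! i - {v}))"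

text \<open>For a fair story, v_i is the unique vertex of P_i not in P_{i-1}.\<close>
definition eps_story :: "'v::linorder set list \<Rightarrow> complex" where
  "eps_story w = (\<Prod>i\<in>{1..<length w}. eps_vP (the_elem (w ! i - w ! (i - 1))) (w ! i))"

definition stories_alg :: "'v set set \<Rightarrow> ('v set list \<Rightarrow> complex) set" where
  "stories_alg K = {f. finite {w. f w \<noteq> 0} \<and> (\<forall>w. f w \<noteq> 0 \<longrightarrow> is_story K w)}"

text \<open>Product: <P_0..P_n> * <Q_0..Q_m> = <P_0..P_n,Q_1..Q_m> if P_n = Q_0, else 0,
  extended bilinearly. A story w arises as such a product exactly from the splittings
  u = take k w, v = w!(k-1) # drop k w with 1 <= k <= length w.\<close>
definition stories_mult :: "('v set list \<Rightarrow> complex) \<Rightarrow> ('v set list \<Rightarrow> complex) \<Rightarrow> ('v set list \<Rightarrow> complex)" where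
  "stories_mult f g = (\<lambda>w. \<Sum>k\<in>{1..length w}. f (take k w) * g (w ! (k - 1) # drop k w))"

definition basis_vec :: "'a \<Rightarrow> ('a \<Rightarrow> complex)" where
  "basis_vec a = (\<lambda>b. if b = a then 1 else 0)"

inductive_set cspan :: "('a \<Rightarrow> complex) set \<Rightarrow> ('a \<Rightarrow> complex) set" for G where
  zero: "(\<lambda>_. 0) \<in> cspan G"
| step: "x \<in> cspan G \<Longrightarrow> g \<in> G \<Longrightarrow> (\<lambda>a. x a + c * g a) \<in> cspan G"

definition simplicial_ideal :: "'v::linorder set set \<Rightarrow> ('v set list \<Rightarrow> complex) set" where
  "simplicial_ideal K = cspan
     ({basis_vec w | w. is_story K w \<and> length w \<ge> 2 \<and> \<not> fair w} \<union>
      {(\<lambda>u. eps_story w * basis_vec w u - eps_story w' * basis_vec w' u) | w w'.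
          is_story K w \<and> is_story K w' \<and> length w \<ge> 2 \<and> length w' = length w \<and>
          fair w \<and> fair w' \<and> hd w = hd w' \<and> last w = last w'})"

text \<open>F P Q is the coefficient of |P><Q|; supported on pairs P \<subseteq> Q of simplices.\<close>
definition incidence_alg :: "'v set set \<Rightarrow> ('v set \<Rightarrow> 'v set \<Rightarrow> complex) set" where
  "incidence_alg K = {F. \<forall>P Q. F P Q \<noteq> 0 \<longrightarrow> P \<in> K \<and> Q \<in> K \<and> P \<subseteq> Q}"

definition incidence_mult :: "'v set set \<Rightarrow> ('v set \<Rightarrow> 'v set \<Rightarrow> complex) \<Rightarrow> ('v set \<Rightarrow> 'v set \<Rightarrow> complex) \<Rightarrow> ('v set \<Rightarrow> 'v set \<Rightarrow> complex)" where
  "incidence_mult K F G = (\<lambda>P S. \<Sum>Q\<in>K. F P Q * G Q S)"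

text \<open>A/I is isomorphic to B iff there is a map phi : A -> B which is complex-linear,
  multiplicative, onto B, and identifies exactly the elements in the same coset of I;
  phi then induces the (well-defined, bijective) isomorphism A/I -> B, and conversely
  any isomorphism A/I -> B composed with the projection A -> A/I is such a phi.\<close>
definition quotient_alg_iso ::
  "('a \<Rightarrow> complex) set \<Rightarrow> (('a \<Rightarrow> complex) \<Rightarrow> ('a \<Rightarrow> complex) \<Rightarrow> ('a \<Rightarrow> complex)) \<Rightarrow>
   ('a \<Rightarrow> complex) set \<Rightarrow> 'b set \<Rightarrow> ('b \<Rightarrow> 'b \<Rightarrow> 'b) \<Rightarrow> ('b \<Rightarrow> 'b \<Rightarrow> 'b) \<Rightarrow> (complex \<Rightarrow> 'b \<Rightarrow> 'b) \<Rightarrow> bool"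
  where
  "quotient_alg_iso A multA I B multB addB scaleB \<longleftrightarrow>
     (\<exists>\<phi>. (\<forall>x\<in>A. \<phi> x \<in> B) \<and>
          (\<forall>x\<in>A. \<forall>y\<in>A. \<phi> (\<lambda>a. x a + y a) = addB (\<phi> x) (\<phi> y)) \<and>
          (\<forall>x\<in>A. \<forall>c. \<phi> (\<lambda>a. c * x a) = scaleB c (\<phi> x)) \<and>
          (\<forall>x\<in>A. \<forall>y\<in>A. \<phi> (multA x y) = multB (\<phi> x) (\<phi> y)) \<and>
          (\<forall>z\<in>B. \<exists>x\<in>A. \<phi> x = z) \<and>
          (\<forall>x\<in>A. \<forall>y\<in>A. \<phi> x = \<phi> y \<longleftrightarrow> (\<lambda>a. x a - y a) \<in> I))"

end

theory Submission
  imports Defs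
begin

(* Send a story w to the incidence element eps_w |P><Q| if w is fair from P to Q, and to 0
   if w is unfair. Cutting a fair story at one of its simplices is a bijection onto the pairs
   of fair stories meeting there, and the signs multiply, so this linear map is
   multiplicative; it visibly kills the generators of the ideal. Fair stories from P to Q
   exist exactly when P is a face of Q, and they all have the same length, so choosing one
   for each such pair gives a section, and modulo the ideal every story is congruent to a
   multiple of the chosen one with the same ends: the kernel is exactly the ideal. *)

lemma last_take_Suc: "j < length w \<Longrightarrow> last (take (Suc j) w) = w ! j"
  by (subst last_conv_nth) (auto simp: min_absorb2)

lemma take_Suc_append_tl_drop: "j < length w \<Longrightarrow> take (Suc j) w @ tl (drop j w) = w"
  by (simp add: tl_drop flip: drop_Suc)

lemma drop_eq_last: "Suc j = length u \<Longrightarrow> drop j u = [last u]"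
  by (induction u arbitrary: j) (auto simp: drop_Cons' split: if_splits)

lemma drop_append_tl:
  "Suc j = length u \<Longrightarrow> v \<noteq> [] \<Longrightarrow> last u = hd v \<Longrightarrow> drop j (u @ tl v) = v"
  by (simp add: drop_eq_last)

lemma append_tl_nth: "Suc j = length u \<Longrightarrow> (u @ tl v) ! j = last u"
  by (metis lessI nth_append_left last_conv_nth diff_Suc_1 length_0_conv nat.distinct(1))

lemma eps_story_Cons_Cons:
  "eps_story (A # B # w) = eps_vP (the_elem (B - A)) B * eps_story (B # w)"
proof -
  let ?f = "\<lambda>i. eps_vP (the_elem ((A # B # w) ! i - (A # B # w) ! (i - 1))) ((A # B # w) ! i)"
  have "eps_story (A # B # w) = ?f 1 * prod ?f {Suc 1..<Suc (Suc (length w))}"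
    unfolding eps_story_def by (subst prod.atLeast_Suc_lessThan) simp_all
  also have "prod ?f {Suc 1..<Suc (Suc (length w))} = (\<Prod>i = 1..<Suc (length w). ?f (Suc i))"
    by (rule prod.shift_bounds_Suc_ivl)
  also have "\<dots> = eps_story (B # w)"
    unfolding eps_story_def by (intro prod.cong) auto
  finally show ?thesis by simp
qed

lemma eps_story_singleton [simp]: "eps_story [A] = 1"
  by (simp add: eps_story_def)

lemma eps_story_append:
  "u \<noteq> [] \<Longrightarrow> v \<noteq> [] \<Longrightarrow> last u = hd v \<Longrightarrow> eps_story (u @ tl v) = eps_story u * eps_story v"
proof (induction u rule: induct_list012)
  case (2 A)
  then show ?case by (cases v) auto
next
  case (3 A B u)
  then show ?case by (simp add: eps_story_Cons_Cons)
qed simp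

lemma eps_story_split:
  assumes "j < length w"
  shows "eps_story w = eps_story (take (Suc j) w) * eps_story (drop j w)"
proof -
  have "w \<noteq> []" "last (take (Suc j) w) = hd (drop j w)"
    using assms by (auto simp: last_take_Suc hd_drop_conv_nth)
  then show ?thesis
    using assms eps_story_append[of "take (Suc j) w" "drop j w"]
    by (simp add: take_Suc_append_tl_drop)
qed

lemma eps_story_square: "eps_story w * eps_story w = 1"
  unfolding eps_story_def prod.distrib[symmetric] eps_vP_def
  by (simp add: power_mult_distrib[symmetric])

definition codim1_face :: "'v set \<Rightarrow> 'v set \<Rightarrow> bool" where
  "codim1_face A B \<longleftrightarrow> (\<exists>v\<in>B. A = B - {v})"

lemma fair_iff_successively_codim1_face: "fair w \<longleftrightarrow> successively codim1_face w"
proof -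
  have "fair w \<longleftrightarrow> (\<forall>i. 0 < i \<and> i < length w \<longrightarrow> codim1_face (w ! (i - 1)) (w ! i))"
    unfolding fair_def codim1_face_def ..
  also have "\<dots> \<longleftrightarrow> (\<forall>i. Suc i < length w \<longrightarrow> codim1_face (w ! i) (w ! Suc i))"
    by (metis Suc_pred' diff_Suc_1 zero_less_Suc)
  finally show ?thesis
    unfolding successively_conv_nth .
qed

lemma successively_codim1_face_card:
  assumes "successively codim1_face w" "w \<noteq> []" "\<forall>X\<in>set w. finite X"
  shows "hd w \<subseteq> last w \<and> card (last w) = card (hd w) + (length w - 1)"
  using assms
proof (induction w rule: induct_list012)
  case (3 A B w)
  then obtain v where "v \<in> B" "A = B - {v}" by (auto simp: codim1_face_def)
  moreover have "finite B" using 3 by simp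
  ultimately have "card B = Suc (card A)" by (metis card_Suc_Diff1)
  then show ?case using 3 \<open>A = B - {v}\<close> by auto
qed auto

definition fair_paths :: "'v set set \<Rightarrow> 'v set \<Rightarrow> 'v set \<Rightarrow> 'v set list set" where
  "fair_paths K P Q =
     {w. w \<noteq> [] \<and> set w \<subseteq> K \<and> successively codim1_face w \<and> hd w = P \<and> last w = Q}"

lemma fair_paths_iff_fair_story:
  "w \<in> fair_paths K P Q \<longleftrightarrow> is_story K w \<and> fair w \<and> hd w = P \<and> last w = Q"
proof -
  have "w ! (i - 1) \<noteq> w ! i" if "fair w" "0 < i" "i < length w" for i
    using that unfolding fair_def by blast
  then show ?thesis
    unfolding fair_paths_def is_story_def fair_iff_successively_codim1_face by blast
qed

lemma fair_paths_not_Nil: "w \<in> fair_paths K P Q \<Longrightarrow> w \<noteq> []"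
  unfolding fair_paths_def by auto

lemma fair_paths_endpoints: "w \<in> fair_paths K P Q \<Longrightarrow> P \<in> K \<and> Q \<in> K"
  unfolding fair_paths_def by auto

lemma fair_paths_take:
  assumes "w \<in> fair_paths K P S" "j < length w"
  shows "take (Suc j) w \<in> fair_paths K P (w ! j)"
proof -
  have "successively codim1_face (take (Suc j) w @ drop (Suc j) w)"
    using assms(1) by (simp add: fair_paths_def)
  then have "successively codim1_face (take (Suc j) w)"
    unfolding successively_append_iff by blast
  then show ?thesis
    using assms set_take_subset[of "Suc j" w] unfolding fair_paths_def by (auto simp: last_take_Suc)
qed

lemma fair_paths_drop:
  assumes "w \<in> fair_paths K P S" "k < length w"
  shows "drop k w \<in> fair_paths K (w ! k) S"
proof -
  have "successively codim1_face (take k w @ drop k w)"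
    using assms(1) by (simp add: fair_paths_def)
  then have "successively codim1_face (drop k w)"
    unfolding successively_append_iff by blast
  then show ?thesis
    using assms set_drop_subset[of k w] unfolding fair_paths_def by (auto simp: hd_drop_conv_nth)
qed

lemma fair_paths_glue:
  assumes "u \<in> fair_paths K P Q" "v \<in> fair_paths K Q S"
  shows "u @ tl v \<in> fair_paths K P S"
proof -
  obtain vs where v: "v = Q # vs"
    using assms(2) unfolding fair_paths_def by (cases v) auto
  then show ?thesis
    using assms unfolding fair_paths_def
    by (cases vs) (simp_all add: successively_append_iff last_append)
qed

lemma bij_betw_split_fair_paths:
  "bij_betw (\<lambda>(w, j). (w ! j, take (Suc j) w, drop j w))
     (SIGMA w:fair_paths K P S. {..<length w})
     (SIGMA Q:K. fair_paths K P Q \<times> fair_paths K Q S)"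
proof (rule bij_betw_byWitness[where f' = "\<lambda>(Q, u, v). (u @ tl v, length u - 1)"],
    goal_cases glue_split split_glue split_maps_to glue_maps_to)
  case glue_split
  show ?case by (auto simp: take_Suc_append_tl_drop)
next
  case split_glue
  show ?case by (auto simp: fair_paths_def append_tl_nth drop_append_tl simp del: drop_append)
next
  case split_maps_to
  show ?case using fair_paths_take fair_paths_drop fair_paths_endpoints by fastforce
next
  case glue_maps_to
  have "(u @ tl v, length u - 1) \<in> (SIGMA w:fair_paths K P S. {..<length w})"
    if uv: "u \<in> fair_paths K P Q" "v \<in> fair_paths K Q S" for Q u v
  proof -
    have "u @ tl v \<in> fair_paths K P S" using uv by (rule fair_paths_glue)
    moreover have "u \<noteq> []" using uv(1) by (rule fair_paths_not_Nil)
    ultimately show ?thesis by (cases u) auto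
  qed
  then show ?case by auto
qed

lemma cspan_base: "g \<in> G \<Longrightarrow> g \<in> cspan G"
  using cspan.step[OF cspan.zero, of g G 1] by simp

lemma cspan_add:
  assumes "x \<in> cspan G" "y \<in> cspan G"
  shows "(\<lambda>a. x a + y a) \<in> cspan G"
  using assms(2)
proof (induction y rule: cspan.induct)
  case zero
  then show ?case using assms(1) by simp
next
  case (step y g c)
  then have "(\<lambda>a. (x a + y a) + c * g a) \<in> cspan G" by (intro cspan.step)
  then show ?case by (simp add: add.assoc)
qed

lemma cspan_scale: "x \<in> cspan G \<Longrightarrow> (\<lambda>a. c * x a) \<in> cspan G"
proof (induction x rule: cspan.induct)
  case zero
  then show ?case using cspan.zero by simp
next
  case (step y g d)
  then have "(\<lambda>a. c * y a + (c * d) * g a) \<in> cspan G" by (intro cspan.step)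
  then show ?case by (simp add: distrib_left mult.assoc)
qed

lemma cspan_diff: "x \<in> cspan G \<Longrightarrow> y \<in> cspan G \<Longrightarrow> (\<lambda>a. x a - y a) \<in> cspan G"
  using cspan_add[OF _ cspan_scale[of y G "-1"], of x] by simp

lemma cspan_sum: "finite I \<Longrightarrow> (\<And>i. i \<in> I \<Longrightarrow> f i \<in> cspan G) \<Longrightarrow> (\<lambda>a. \<Sum>i\<in>I. f i a) \<in> cspan G"
proof (induction I rule: finite_induct)
  case empty
  then show ?case using cspan.zero by simp
next
  case (insert i I)
  then have "(\<lambda>a. f i a + (\<Sum>i\<in>I. f i a)) \<in> cspan G" by (intro cspan_add) auto
  then show ?case using insert by simp
qed

lemma basis_vec_expansion: "finite {a. f a \<noteq> 0} \<Longrightarrow> f = (\<lambda>b. \<Sum>a | f a \<noteq> 0. f a * basis_vec a b)"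
proof (rule ext)
  fix b assume "finite {a. f a \<noteq> 0}"
  then have "(\<Sum>a | f a \<noteq> 0. f a * basis_vec a b) = (\<Sum>a | f a \<noteq> 0. if b = a then f a else 0)"
    unfolding basis_vec_def by (intro sum.cong) auto
  also have "\<dots> = f b" using \<open>finite _\<close> by (simp add: sum.delta)
  finally show "f b = (\<Sum>a | f a \<noteq> 0. f a * basis_vec a b)" by simp
qed

lemma unfair_story_in_simplicial_ideal:
  assumes "is_story K w" "\<not> fair w"
  shows "basis_vec w \<in> simplicial_ideal K"
proof -
  have "length w \<ge> 2"
  proof (rule ccontr)
    assume "\<not> length w \<ge> 2"
    then have "fair w" unfolding fair_def by auto
    then show False using assms(2) by contradiction
  qed
  then show ?thesis
    unfolding simplicial_ideal_def using assms by (intro cspan_base) blast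
qed

definition to_incidence ::
    "'v::linorder set set \<Rightarrow> ('v set list \<Rightarrow> complex) \<Rightarrow> 'v set \<Rightarrow> 'v set \<Rightarrow> complex" where
  "to_incidence K f P Q = (\<Sum>w\<in>fair_paths K P Q. eps_story w * f w)"

lemma to_incidence_add: "to_incidence K (\<lambda>a. f a + g a) P Q = to_incidence K f P Q + to_incidence K g P Q"
  unfolding to_incidence_def by (simp add: distrib_left sum.distrib)

lemma to_incidence_scale: "to_incidence K (\<lambda>a. c * f a) P Q = c * to_incidence K f P Q"
  unfolding to_incidence_def by (simp add: sum_distrib_left mult_ac)

lemma to_incidence_diff: "to_incidence K (\<lambda>a. f a - g a) P Q = to_incidence K f P Q - to_incidence K g P Q"
  unfolding to_incidence_def by (simp add: right_diff_distrib sum_subtractf)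

lemma to_incidence_linear_combination:
  "to_incidence K (\<lambda>a. \<Sum>i\<in>I. c i * f i a) P Q = (\<Sum>i\<in>I. c i * to_incidence K (f i) P Q)"
  unfolding to_incidence_def by (simp add: sum_distrib_left mult_ac) (rule sum.swap)

definition some_fair_path :: "'v set set \<Rightarrow> 'v set \<Rightarrow> 'v set \<Rightarrow> 'v set list" where
  "some_fair_path K P Q = (SOME w. w \<in> fair_paths K P Q)"

definition is_chosen_fair_path :: "'v set set \<Rightarrow> 'v set list \<Rightarrow> bool" where
  "is_chosen_fair_path K w \<longleftrightarrow>
     w \<in> fair_paths K (hd w) (last w) \<and> w = some_fair_path K (hd w) (last w)"

lemma is_chosen_fair_path_iff:
  assumes "w \<in> fair_paths K P Q"
  shows "is_chosen_fair_path K w \<longleftrightarrow> w = some_fair_path K P Q"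
  using assms unfolding is_chosen_fair_path_def fair_paths_def by auto

definition of_incidence ::
    "'v::linorder set set \<Rightarrow> ('v set \<Rightarrow> 'v set \<Rightarrow> complex) \<Rightarrow> 'v set list \<Rightarrow> complex" where
  "of_incidence K F w = (if is_chosen_fair_path K w then eps_story w * F (hd w) (last w) else 0)"

lemma of_incidence_linear_combination:
  "of_incidence K (\<lambda>P Q. \<Sum>i\<in>I. c i * F i P Q) w = (\<Sum>i\<in>I. c i * of_incidence K (F i) w)"
  unfolding of_incidence_def by (simp add: sum_distrib_left mult_ac)

locale finite_simplicial_complex =
  fixes V :: "'v::linorder set" and K :: "'v set set"
  assumes simplicial_complex: "simplicial_complex V K"
begin

lemma finite_vertices: "finite V"
  using simplicial_complex unfolding simplicial_complex_def by blast

lemma simplex_subset: "X \<in> K \<Longrightarrow> X \<subseteq> V"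
  using simplicial_complex unfolding simplicial_complex_def by blast

lemma simplex_nonempty: "X \<in> K \<Longrightarrow> X \<noteq> {}"
  using simplicial_complex unfolding simplicial_complex_def by blast

lemma face_in_complex: "X \<in> K \<Longrightarrow> Y \<noteq> {} \<Longrightarrow> Y \<subseteq> X \<Longrightarrow> Y \<in> K"
  using simplicial_complex unfolding simplicial_complex_def by blast

lemma finite_simplex: "X \<in> K \<Longrightarrow> finite X"
  using finite_vertices simplex_subset by (rule finite_subset[rotated])

lemma finite_complex: "finite K"
proof (rule finite_subset)
  show "K \<subseteq> Pow V" using simplex_subset by blast
qed (simp add: finite_vertices)

lemma fair_paths_subset_card:
  assumes "w \<in> fair_paths K P Q"
  shows "P \<subseteq> Q" "card Q = card P + (length w - 1)"
  using successively_codim1_face_card[of w] assms finite_simplex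
  unfolding fair_paths_def by auto

lemma finite_fair_paths: "finite (fair_paths K P Q)"
proof (rule finite_subset)
  show "fair_paths K P Q \<subseteq> {w. set w \<subseteq> K \<and> length w \<le> Suc (card V)}"
  proof
    fix w assume w: "w \<in> fair_paths K P Q"
    then have "card Q \<le> card V"
      using fair_paths_endpoints simplex_subset finite_vertices by (blast intro: card_mono)
    then show "w \<in> {w. set w \<subseteq> K \<and> length w \<le> Suc (card V)}"
      using fair_paths_subset_card(2)[OF w] w unfolding fair_paths_def by auto
  qed
  show "finite {w. set w \<subseteq> K \<and> length w \<le> Suc (card V)}"
    by (rule finite_lists_length_le[OF finite_complex])
qed

lemma fair_paths_same_length:
  assumes "u \<in> fair_paths K P Q" "w \<in> fair_paths K P Q"
  shows "length u = length w"
proof -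
  have "length u - 1 = length w - 1"
    using fair_paths_subset_card(2)[OF assms(1)] fair_paths_subset_card(2)[OF assms(2)] by simp
  moreover have "u \<noteq> []" "w \<noteq> []"
    using assms by (auto dest: fair_paths_not_Nil)
  ultimately show ?thesis by (cases u; cases w) auto
qed

lemma fair_paths_refl:
  assumes "w \<in> fair_paths K P P"
  shows "w = [P]"
proof -
  have "[P] \<in> fair_paths K P P"
    using fair_paths_endpoints[OF assms] unfolding fair_paths_def by simp
  then have "length w = 1"
    using fair_paths_same_length[OF assms] by simp
  then show ?thesis
    using assms unfolding fair_paths_def by (cases w) auto
qed

lemma fair_path_exists:
  assumes "P \<in> K" "Q \<in> K" "P \<subseteq> Q"
  shows "\<exists>w. w \<in> fair_paths K P Q"
  using assms(2,3)
proof (induction "card (Q - P)" arbitrary: Q)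
  case 0
  have "finite (Q - P)" using finite_simplex[OF \<open>Q \<in> K\<close>] by simp
  then have "Q = P" using 0 by auto
  moreover have "[P] \<in> fair_paths K P P" using \<open>P \<in> K\<close> unfolding fair_paths_def by simp
  ultimately show ?case by blast
next
  case (Suc n)
  then have "Q - P \<noteq> {}" by force
  then obtain x where x: "x \<in> Q - P" by blast
  have "P \<subseteq> Q - {x}" using Suc.prems(2) x by blast
  then have "Q - {x} \<noteq> {}" using simplex_nonempty[OF \<open>P \<in> K\<close>] by auto
  then have "Q - {x} \<in> K" by (rule face_in_complex[OF Suc.prems(1)]) blast
  moreover have "card (Q - {x} - P) = n"
  proof -
    have "Q - {x} - P = (Q - P) - {x}" by blast
    then show ?thesis using Suc.hyps(2) x finite_simplex[OF Suc.prems(1)] by simp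
  qed
  ultimately obtain u where "u \<in> fair_paths K P (Q - {x})"
    using Suc.hyps(1) \<open>P \<subseteq> Q - {x}\<close> by blast
  moreover have "[Q - {x}, Q] \<in> fair_paths K (Q - {x}) Q"
    using \<open>Q - {x} \<in> K\<close> Suc.prems(1) x unfolding fair_paths_def codim1_face_def by auto
  ultimately show ?case using fair_paths_glue by blast
qed

lemma fair_paths_nonempty_iff: "fair_paths K P Q \<noteq> {} \<longleftrightarrow> P \<in> K \<and> Q \<in> K \<and> P \<subseteq> Q"
  using fair_path_exists fair_paths_endpoints fair_paths_subset_card(1) by blast

lemma some_fair_path: "P \<in> K \<Longrightarrow> Q \<in> K \<Longrightarrow> P \<subseteq> Q \<Longrightarrow> some_fair_path K P Q \<in> fair_paths K P Q"
  unfolding some_fair_path_def using fair_path_exists by (rule someI_ex)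

lemma to_incidence_basis_vec:
  "to_incidence K (basis_vec w) P Q = (if w \<in> fair_paths K P Q then eps_story w else 0)"
  unfolding to_incidence_def basis_vec_def using finite_fair_paths
  by (simp add: if_distrib sum.delta' cong: if_cong)

lemma to_incidence_in_incidence_alg: "to_incidence K f \<in> incidence_alg K"
proof -
  have "fair_paths K P Q \<noteq> {}" if "to_incidence K f P Q \<noteq> 0" for P Q
    using that unfolding to_incidence_def by auto
  then show ?thesis
    unfolding incidence_alg_def using fair_paths_nonempty_iff by blast
qed

lemma to_incidence_mult:
  "to_incidence K (stories_mult f g) P S = incidence_mult K (to_incidence K f) (to_incidence K g) P S"
proof -
  let ?split = "\<lambda>(w, j). (w ! j, take (Suc j) w, drop j w)"
  let ?h = "\<lambda>(Q, u, v). (eps_story u * f u) * (eps_story v * g v)"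
  have "to_incidence K (stories_mult f g) P S =
      (\<Sum>w\<in>fair_paths K P S. \<Sum>j<length w. eps_story w * (f (take (Suc j) w) * g (drop j w)))"
    unfolding to_incidence_def stories_mult_def sum_distrib_left
    by (simp add: sum.atLeast1_atMost_eq Cons_nth_drop_Suc)
  also have "\<dots> = (\<Sum>x\<in>(SIGMA w:fair_paths K P S. {..<length w}). ?h (?split x))"
  proof -
    have "eps_story w * (f (take (Suc j) w) * g (drop j w)) = ?h (?split (w, j))" if "j < length w" for w j
      using eps_story_split[OF that] by (simp add: mult_ac)
    then show ?thesis by (subst sum.Sigma) (auto simp: finite_fair_paths intro!: sum.cong)
  qed
  also have "\<dots> = sum ?h (SIGMA Q:K. fair_paths K P Q \<times> fair_paths K Q S)"
    by (rule sum.reindex_bij_betw[OF bij_betw_split_fair_paths])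
  also have "\<dots> = incidence_mult K (to_incidence K f) (to_incidence K g) P S"
    unfolding incidence_mult_def to_incidence_def sum_product
    by (subst sum.Sigma[symmetric]) (auto simp: finite_complex finite_fair_paths sum.cartesian_product)
  finally show ?thesis .
qed

lemma of_incidence_in_stories_alg: "of_incidence K F \<in> stories_alg K"
proof -
  have support: "{w. of_incidence K F w \<noteq> 0} \<subseteq> {w. is_chosen_fair_path K w}"
    unfolding of_incidence_def by auto
  have "{w. is_chosen_fair_path K w} \<subseteq> (\<lambda>(P, Q). some_fair_path K P Q) ` (K \<times> K)"
    unfolding is_chosen_fair_path_def by (force dest: fair_paths_endpoints)
  then have "finite {w. of_incidence K F w \<noteq> 0}"
    using support finite_complex by (meson finite_SigmaI finite_imageI finite_subset)
  moreover have "is_story K w" if "is_chosen_fair_path K w" for w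
    using that fair_paths_iff_fair_story unfolding is_chosen_fair_path_def by blast
  ultimately show ?thesis
    using support unfolding stories_alg_def by blast
qed

lemma to_incidence_of_incidence:
  assumes "F \<in> incidence_alg K"
  shows "to_incidence K (of_incidence K F) = F"
proof (intro ext)
  fix P Q
  have "to_incidence K (of_incidence K F) P Q =
      (\<Sum>w\<in>fair_paths K P Q. if w = some_fair_path K P Q then F P Q else 0)"
    unfolding to_incidence_def of_incidence_def
    by (intro sum.cong refl) (auto simp: is_chosen_fair_path_iff fair_paths_def eps_story_square mult.assoc[symmetric])
  also have "\<dots> = (if some_fair_path K P Q \<in> fair_paths K P Q then F P Q else 0)"
    by (simp add: sum.delta' finite_fair_paths)
  also have "\<dots> = F P Q"
    using assms some_fair_path[of P Q] unfolding incidence_alg_def by (cases "F P Q = 0") auto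
  finally show "to_incidence K (of_incidence K F) P Q = F P Q" .
qed

lemma fair_paths_diff_in_simplicial_ideal:
  assumes "u \<in> fair_paths K P Q" "w \<in> fair_paths K P Q"
  shows "(\<lambda>a. eps_story u * basis_vec u a - eps_story w * basis_vec w a) \<in> simplicial_ideal K"
proof (cases "length u \<ge> 2")
  case True
  then show ?thesis
    using assms fair_paths_same_length[OF assms]
    unfolding simplicial_ideal_def fair_paths_iff_fair_story
    by (intro cspan_base UnI2 CollectI exI[of _ u] exI[of _ w]) auto
next
  case False
  \<comment> \<open>the generators only involve stories of length at least two; here u = w = [P]\<close>
  have "u \<noteq> []" using assms(1) by (rule fair_paths_not_Nil)
  with False obtain A where "u = [A]" by (cases u) (auto simp: Suc_le_eq)
  then have "P = Q" using assms(1) unfolding fair_paths_def by auto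
  then have "u = w" using assms fair_paths_refl by blast
  then show ?thesis using cspan.zero unfolding simplicial_ideal_def by simp
qed

lemma basis_vec_diff_of_to_incidence_in_simplicial_ideal:
  assumes "is_story K w"
  shows "(\<lambda>a. basis_vec w a - of_incidence K (to_incidence K (basis_vec w)) a) \<in> simplicial_ideal K"
proof (cases "fair w")
  case False
  then have "to_incidence K (basis_vec w) = (\<lambda>_ _. 0)"
    by (intro ext) (simp add: to_incidence_basis_vec fair_paths_iff_fair_story)
  then have "(\<lambda>a. basis_vec w a - of_incidence K (to_incidence K (basis_vec w)) a) = basis_vec w"
    by (simp add: of_incidence_def fun_eq_iff)
  then show ?thesis
    using unfair_story_in_simplicial_ideal[OF assms False] by simp
next
  case True
  define P Q where "P = hd w" and "Q = last w"
  define r where "r = some_fair_path K P Q"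
  have w: "w \<in> fair_paths K P Q"
    using assms True unfolding P_def Q_def by (simp add: fair_paths_iff_fair_story)
  then have "P \<in> K" "Q \<in> K" "P \<subseteq> Q"
    using fair_paths_endpoints fair_paths_subset_card(1) by blast+
  then have r: "r \<in> fair_paths K P Q"
    unfolding r_def by (rule some_fair_path)
  have w_in_iff: "w \<in> fair_paths K P' Q' \<longleftrightarrow> P' = P \<and> Q' = Q" for P' Q'
    using w unfolding fair_paths_def by auto
  have chosen_iff: "is_chosen_fair_path K a \<and> hd a = P \<and> last a = Q \<longleftrightarrow> a = r" for a
  proof
    assume "is_chosen_fair_path K a \<and> hd a = P \<and> last a = Q"
    then show "a = r" unfolding r_def is_chosen_fair_path_def by auto
  next
    assume "a = r"
    then show "is_chosen_fair_path K a \<and> hd a = P \<and> last a = Q"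
      using is_chosen_fair_path_iff[OF r] r unfolding r_def fair_paths_def by auto
  qed
  have "of_incidence K (to_incidence K (basis_vec w)) a = eps_story w * (eps_story r * basis_vec r a)" for a
    unfolding of_incidence_def to_incidence_basis_vec w_in_iff
    using chosen_iff[of a] by (auto simp: basis_vec_def)
  then have "(\<lambda>a. basis_vec w a - of_incidence K (to_incidence K (basis_vec w)) a) =
      (\<lambda>a. eps_story w * (eps_story w * basis_vec w a - eps_story r * basis_vec r a))"
    using eps_story_square[of w] by (simp add: right_diff_distrib mult.assoc[symmetric])
  moreover have "(\<lambda>a. eps_story w * (eps_story w * basis_vec w a - eps_story r * basis_vec r a))
      \<in> simplicial_ideal K"
    using fair_paths_diff_in_simplicial_ideal[OF w r] unfolding simplicial_ideal_def by (rule cspan_scale)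
  ultimately show ?thesis by simp
qed

lemma diff_of_to_incidence_in_simplicial_ideal:
  assumes "x \<in> stories_alg K"
  shows "(\<lambda>a. x a - of_incidence K (to_incidence K x) a) \<in> simplicial_ideal K"
proof -
  let ?S = "{w. x w \<noteq> 0}"
  let ?r = "\<lambda>w a. basis_vec w a - of_incidence K (to_incidence K (basis_vec w)) a"
  have S: "finite ?S" "\<And>w. w \<in> ?S \<Longrightarrow> is_story K w"
    using assms unfolding stories_alg_def by auto
  have x: "x = (\<lambda>a. \<Sum>w\<in>?S. x w * basis_vec w a)"
    using S(1) by (rule basis_vec_expansion)
  have "to_incidence K x = (\<lambda>P Q. \<Sum>w\<in>?S. x w * to_incidence K (basis_vec w) P Q)"
    by (intro ext, subst x) (rule to_incidence_linear_combination)
  then have "x a - of_incidence K (to_incidence K x) a = (\<Sum>w\<in>?S. x w * ?r w a)" for a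
    using fun_cong[OF x, of a]
    by (simp add: of_incidence_linear_combination right_diff_distrib sum_subtractf)
  moreover have "(\<lambda>a. \<Sum>w\<in>?S. x w * ?r w a) \<in> simplicial_ideal K"
    using S basis_vec_diff_of_to_incidence_in_simplicial_ideal cspan_scale
    unfolding simplicial_ideal_def by (intro cspan_sum) blast+
  ultimately show ?thesis by simp
qed

lemma to_incidence_simplicial_ideal:
  assumes "g \<in> simplicial_ideal K"
  shows "to_incidence K g = (\<lambda>_ _. 0)"
  using assms unfolding simplicial_ideal_def
proof (induction g rule: cspan.induct)
  case zero
  show ?case by (simp add: to_incidence_def)
next
  case (step x g c)
  from step.hyps(2) have "to_incidence K g = (\<lambda>_ _. 0)"
  proof (elim UnE CollectE exE conjE)
    fix w assume "g = basis_vec w" "\<not> fair w"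
    then show ?thesis
      by (intro ext) (simp add: to_incidence_basis_vec fair_paths_iff_fair_story)
  next
    fix u w
    assume g: "g = (\<lambda>a. eps_story u * basis_vec u a - eps_story w * basis_vec w a)"
      and "is_story K u" "is_story K w" "fair u" "fair w" "hd u = hd w" "last u = last w"
    then have "u \<in> fair_paths K P Q \<longleftrightarrow> w \<in> fair_paths K P Q" for P Q
      by (simp add: fair_paths_iff_fair_story)
    then show ?thesis
      unfolding g
      by (intro ext) (simp add: to_incidence_diff to_incidence_scale to_incidence_basis_vec eps_story_square)
  qed
  then show ?case
    using step.IH by (intro ext) (simp add: to_incidence_add to_incidence_scale)
qed

lemma to_incidence_eq_iff:
  assumes "x \<in> stories_alg K" "y \<in> stories_alg K"
  shows "to_incidence K x = to_incidence K y \<longleftrightarrow> (\<lambda>a. x a - y a) \<in> simplicial_ideal K"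
proof
  assume eq: "to_incidence K x = to_incidence K y"
  from diff_of_to_incidence_in_simplicial_ideal[OF assms(1)] diff_of_to_incidence_in_simplicial_ideal[OF assms(2)]
  have "(\<lambda>a. (x a - of_incidence K (to_incidence K x) a) - (y a - of_incidence K (to_incidence K y) a))
      \<in> simplicial_ideal K"
    unfolding simplicial_ideal_def by (rule cspan_diff)
  then show "(\<lambda>a. x a - y a) \<in> simplicial_ideal K"
    unfolding eq by simp
next
  assume "(\<lambda>a. x a - y a) \<in> simplicial_ideal K"
  then have "to_incidence K (\<lambda>a. x a - y a) = (\<lambda>_ _. 0)"
    by (rule to_incidence_simplicial_ideal)
  then have "to_incidence K x P Q - to_incidence K y P Q = 0" for P Q
    by (simp add: fun_eq_iff flip: to_incidence_diff)
  then show "to_incidence K x = to_incidence K y"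
    by (intro ext) simp
qed

end

theorem mainTheorem3:
  fixes V :: "'v::linorder set" and K :: "'v set set"
  assumes "simplicial_complex V K"
  shows "quotient_alg_iso (stories_alg K) stories_mult (simplicial_ideal K)
           (incidence_alg K) (incidence_mult K)
           (\<lambda>F G P Q. F P Q + G P Q) (\<lambda>c F P Q. c * F P Q)"
proof -
  interpret finite_simplicial_complex V K
    using assms by unfold_locales
  show ?thesis
    unfolding quotient_alg_iso_def
  proof (intro exI[of _ "to_incidence K"] conjI ballI allI)
    fix x y :: "'v set list \<Rightarrow> complex" and c F
    show "to_incidence K x \<in> incidence_alg K"
      by (rule to_incidence_in_incidence_alg)
    show "to_incidence K (\<lambda>a. x a + y a) = (\<lambda>P Q. to_incidence K x P Q + to_incidence K y P Q)"
      by (intro ext) (rule to_incidence_add)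
    show "to_incidence K (\<lambda>a. c * x a) = (\<lambda>P Q. c * to_incidence K x P Q)"
      by (intro ext) (rule to_incidence_scale)
    show "to_incidence K (stories_mult x y) = incidence_mult K (to_incidence K x) (to_incidence K y)"
      by (intro ext) (rule to_incidence_mult)
    assume "F \<in> incidence_alg K"
    then show "\<exists>x\<in>stories_alg K. to_incidence K x = F"
      using of_incidence_in_stories_alg to_incidence_of_incidence by blast
  next
    fix x y assume "x \<in> stories_alg K" "y \<in> stories_alg K"
    then show "to_incidence K x = to_incidence K y \<longleftrightarrow> (\<lambda>a. x a - y a) \<in> simplicial_ideal K"
      by (rule to_incidence_eq_iff)
  qed
qed

end
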